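(* Let $\alpha_1,\alpha_2>0$ satisfy $\alpha_1-\alpha_2\ge e^2$. Let $p$ be analytic in $\mathbb{D}$ with $p(0)=1$. If $$1+\alpha_1 zp'(z)+\alpha_2 z^2p''(z)\prec 1+ze^z,$$ then $p(z)\prec e^z$.
   Context: $\mathbb{D}$ is the open unit disk. For $g,h$ analytic in $\mathbb{D}$, $g\prec h$ means there is an analytic $w:\mathbb{D}\to\mathbb{D}$ with $w(0)=0$ and $g=h\circ w$. *)

theory Defs
  imports "HOL-Complex_Analysis.Complex_Analysis"
begin

definition subordinate :: "(complex \<Rightarrow> complex) \<Rightarrow> (complex \<Rightarrow> complex) \<Rightarrow> bool"
  (infix "\<prec>\<^sub>D" 50) where
  "g \<prec>\<^sub>D h \<longleftrightarrow> (\<exists>w. w holomorphic_on ball 0 1 \<and> w ` ball 0 1 \<subseteq> ball 0 1 \<and> w 0 = 0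
      \<and> (\<forall>z\<in>ball 0 1. g z = h (w z)))"

end

theory Submission
  imports Defs
begin

text \<open>The Schwarz function of the hypothesis shows that
  \<open>\<alpha>\<^sub>1 z p' + \<alpha>\<^sub>2 z\<^sup>2 p''\<close> is bounded by \<open>e |z|\<close>. Along each radius the integrating factor
  \<open>t\<^bsup>\<alpha>\<^sub>1/\<alpha>\<^sub>2\<^esup>\<close> turns this into the bound \<open>|p'| \<le> e/\<alpha>\<^sub>1 \<le> 1/e < 1/2\<close>, so \<open>|p - 1| < 1/2\<close>
  on the disk, and then \<open>w = Ln p\<close> is a Schwarz function with \<open>p = exp \<circ> w\<close>.\<close>

lemma subordinate_norm_diff_le:
  assumes "g \<prec>\<^sub>D h" and "\<And>\<zeta>. \<zeta> \<in> ball 0 1 \<Longrightarrow> norm (h \<zeta> - h 0) \<le> M * norm \<zeta>"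
    and "z \<in> ball 0 1"
  shows "norm (g z - g 0) \<le> M * norm z"
proof -
  obtain w where w: "w holomorphic_on ball 0 1" "w ` ball 0 1 \<subseteq> ball 0 1" "w 0 = 0"
    and gw: "\<And>z. z \<in> ball 0 1 \<Longrightarrow> g z = h (w z)"
    using assms(1) unfolding subordinate_def by blast
  have wz: "w z \<in> ball 0 1" using w(2) assms(3) by blast
  have "norm (g z - g 0) = norm (h (w z) - h 0)" using gw assms(3) w(3) by simp
  also have "\<dots> \<le> M * norm (w z)" using assms(2) wz .
  also have "\<dots> \<le> M * norm z"
  proof (rule mult_left_mono)
    show "norm (w z) \<le> norm z"
      using Schwarz_Lemma(1)[OF w(1) w(3)] w(2) assms(3) by (force simp: subset_iff)
    show "0 \<le> M" using assms(2)[of "1/2"] by (simp, smt (verit) norm_ge_zero)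
  qed
  finally show ?thesis .
qed

lemma norm_mult_exp_le:
  fixes \<zeta> :: complex
  assumes "norm \<zeta> \<le> 1"
  shows "norm (\<zeta> * exp \<zeta>) \<le> exp 1 * norm \<zeta>"
proof -
  have "Re \<zeta> \<le> 1" using complex_Re_le_cmod[of \<zeta>] assms by linarith
  then have "norm (exp \<zeta>) \<le> exp 1" by (simp add: norm_exp_eq_Re)
  then show ?thesis by (simp add: norm_mult mult.commute mult_left_mono)
qed

text \<open>With \<open>\<gamma> = a\<^sub>1/a\<^sub>2\<close> and \<open>\<zeta> = s z\<close>, the derivative of \<open>s\<^bsup>\<gamma>\<^esup> z D(s z)\<close> is
  \<open>s\<^bsup>\<gamma>-2\<^esup>/a\<^sub>2 \<cdot> (a\<^sub>1 \<zeta> D \<zeta> + a\<^sub>2 \<zeta>\<^sup>2 D' \<zeta>)\<close>, which is bounded by the derivative of \<open>s\<^bsup>\<gamma>\<^esup> K|z|/a\<^sub>1\<close>.\<close>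

lemma Euler_bound_imp_norm_mult_le:
  fixes a1 a2 K :: real and D :: "complex \<Rightarrow> complex"
  assumes a1: "a1 > 0" and a2: "a2 > 0" and z: "norm z < 1"
    and hol: "D holomorphic_on ball 0 1"
    and Euler: "\<And>\<zeta>. \<zeta> \<in> ball 0 1 \<Longrightarrow>
        norm (of_real a1 * \<zeta> * D \<zeta> + of_real a2 * \<zeta>\<^sup>2 * deriv D \<zeta>) \<le> K * norm \<zeta>"
  shows "norm (z * D z) \<le> K * norm z / a1"
proof -
  define \<gamma> where "\<gamma> = a1 / a2"
  have \<gamma>: "\<gamma> > 0" using a1 a2 by (simp add: \<gamma>_def)
  define C where "C = K * norm z / a1"
  define f where "f = (\<lambda>s::real. (s powr \<gamma>) *\<^sub>R (z * D (of_real s * z)))"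
  define f' where "f' = (\<lambda>s::real. (s powr \<gamma>) *\<^sub>R (z * (deriv D (of_real s * z) * z))
       + (\<gamma> * s powr (\<gamma> - 1)) *\<^sub>R (z * D (of_real s * z)))"
  define \<phi> where "\<phi> = (\<lambda>s::real. C * s powr \<gamma>)"
  define \<phi>' where "\<phi>' = (\<lambda>s::real. C * (\<gamma> * s powr (\<gamma> - 1)))"
  have inball: "of_real s * z \<in> ball 0 1" if "s \<in> {0..1}" for s
  proof -
    have "norm (of_real s * z) = \<bar>s\<bar> * norm z" by (simp add: norm_mult)
    also have "\<dots> \<le> norm z" using that by (simp add: mult_left_le_one_le)
    finally show ?thesis using z by simp
  qed
  have dD: "(D has_field_derivative deriv D \<zeta>) (at \<zeta>)" if "\<zeta> \<in> ball 0 1" for \<zeta>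
    by (rule holomorphic_derivI[OF hol open_ball that])
  have "continuous_on {0..1} (\<lambda>s::real. D (of_real s * z))"
    by (rule continuous_on_compose2[OF holomorphic_on_imp_continuous_on[OF hol]])
       (auto intro!: continuous_intros inball)
  then have cf: "continuous_on {0..1} f"
    unfolding f_def by (intro continuous_intros continuous_on_powr') (use \<gamma> in auto)
  have c\<phi>: "continuous_on {0..1} \<phi>"
    unfolding \<phi>_def by (intro continuous_intros continuous_on_powr') (use \<gamma> in auto)
  have df: "(f has_vector_derivative f' s) (at s)" if s: "0 < s" "s < 1" for s
  proof -
    have "((\<lambda>\<zeta>. D (\<zeta> * z)) has_field_derivative deriv D (of_real s * z) * z) (at (of_real s))"
      using DERIV_chain2[OF dD[OF inball] DERIV_cmult_right[OF DERIV_ident, of z]] s by simp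
    then have "((\<lambda>\<zeta>. z * D (\<zeta> * z)) has_field_derivative
        z * (deriv D (of_real s * z) * z)) (at (of_real s))"
      by (rule DERIV_cmult)
    then have "((\<lambda>x. z * D (of_real x * z)) has_vector_derivative
        z * (deriv D (of_real s * z) * z)) (at s)"
      by (rule has_vector_derivative_real_field)
    then show ?thesis
      unfolding f_def f'_def
      by (rule has_vector_derivative_scaleR[OF has_real_derivative_powr[OF s(1)]])
  qed
  have d\<phi>: "(\<phi> has_vector_derivative \<phi>' s) (at s)" if s: "0 < s" "s < 1" for s
    unfolding \<phi>_def \<phi>'_def has_real_derivative_iff_has_vector_derivative[symmetric]
    by (rule DERIV_cmult[OF has_real_derivative_powr[OF s(1)]])
  have bnd: "norm (f' s) \<le> \<phi>' s" if s: "0 < s" "s < 1" for s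
  proof -
    define \<zeta> where "\<zeta> = of_real s * z"
    define c where "c = s powr (\<gamma> - 2)"
    have c: "c > 0" using s by (simp add: c_def)
    have "s powr \<gamma> = c * s^2" using powr_add[of s "\<gamma> - 2" 2] s by (simp add: c_def)
    moreover have c_s: "s powr (\<gamma> - 1) = c * s" using powr_add[of s "\<gamma> - 2" 1] s by (simp add: c_def)
    ultimately have "f' s = (c / a2) *\<^sub>R
        (of_real a1 * \<zeta> * D \<zeta> + of_real a2 * \<zeta>\<^sup>2 * deriv D \<zeta>)"
      using a2 unfolding f'_def \<zeta>_def \<gamma>_def
      by (simp add: scaleR_conv_of_real field_simps power2_eq_square)
    then have "norm (f' s) = (c / a2) *
        norm (of_real a1 * \<zeta> * D \<zeta> + of_real a2 * \<zeta>\<^sup>2 * deriv D \<zeta>)"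
      using c a2 by simp
    also have "\<dots> \<le> (c / a2) * (K * norm \<zeta>)"
      by (rule mult_left_mono[OF Euler]) (use inball[of s] s c a2 in \<open>auto simp: \<zeta>_def\<close>)
    also have "\<dots> = \<phi>' s"
      unfolding \<phi>'_def c_s unfolding C_def \<gamma>_def \<zeta>_def using s a1 a2 by (simp add: norm_mult field_simps)
    finally show ?thesis .
  qed
  have "norm (f 1 - f 0) \<le> \<phi> 1 - \<phi> 0"
    by (rule differentiable_bound_general[OF zero_less_one cf c\<phi> df d\<phi> bnd])
  then show ?thesis using \<gamma> by (simp add: f_def \<phi>_def C_def)
qed

lemma Euler_bound_imp_norm_le:
  fixes a1 a2 K :: real and D :: "complex \<Rightarrow> complex"
  assumes "a1 > 0" and "a2 > 0" and hol: "D holomorphic_on ball 0 1"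
    and "\<And>\<zeta>. \<zeta> \<in> ball 0 1 \<Longrightarrow>
        norm (of_real a1 * \<zeta> * D \<zeta> + of_real a2 * \<zeta>\<^sup>2 * deriv D \<zeta>) \<le> K * norm \<zeta>"
    and z: "z \<in> ball 0 1"
  shows "norm (D z) \<le> K / a1"
proof -
  have punctured: "norm (D \<zeta>) \<le> K / a1" if "\<zeta> \<in> ball 0 1" "\<zeta> \<noteq> 0" for \<zeta>
  proof -
    have "norm \<zeta> * norm (D \<zeta>) \<le> norm \<zeta> * (K / a1)"
      using Euler_bound_imp_norm_mult_le[OF assms(1,2) _ hol assms(4), of \<zeta>] that
      by (simp add: norm_mult mult.commute)
    then show ?thesis using that by (subst (asm) mult_le_cancel_left_pos) auto
  qed
  show ?thesis
  proof (cases "z = 0")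
    case True
    have "isCont D 0"
      using holomorphic_on_imp_continuous_on[OF hol] by (simp add: continuous_on_interior)
    then have "((\<lambda>x. norm (D x)) \<longlongrightarrow> norm (D 0)) (at 0)"
      by (intro tendsto_norm) (simp add: isCont_def)
    moreover have "eventually (\<lambda>x. norm (D x) \<le> K / a1) (at 0)"
      unfolding eventually_at by (rule exI[of _ 1]) (auto intro!: punctured simp: dist_norm)
    ultimately show ?thesis using True by (auto intro: tendsto_upperbound)
  qed (use punctured z in blast)
qed

lemma norm_Ln_one_plus_less_one:
  fixes u :: complex
  assumes "norm u < 1 / 2"
  shows "norm (Ln (1 + u)) < 1"
proof -
  define r where "r = norm u"
  have r: "0 \<le> r" "r < 1 / 2" using assms by (auto simp: r_def)
  have "norm (Ln (1 + u) - u) \<le> r\<^sup>2 / (1 - r)"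
    unfolding r_def by (rule Ln_approx_linear) (use r in \<open>simp add: r_def\<close>)
  then have "norm (Ln (1 + u)) \<le> r + r\<^sup>2 / (1 - r)"
    using norm_triangle_ineq[of "Ln (1 + u) - u" u] unfolding r_def by simp
  also have "\<dots> < 1" using r by (simp add: field_simps power2_eq_square)
  finally show ?thesis .
qed

lemma subordinate_exp_if_norm_diff_one_less:
  assumes hol: "p holomorphic_on ball 0 1" and p0: "p 0 = 1"
    and near: "\<And>z. z \<in> ball 0 1 \<Longrightarrow> norm (p z - 1) < 1 / 2"
  shows "p \<prec>\<^sub>D exp"
proof -
  have Re_pos: "Re (p z) > 0" if "z \<in> ball 0 1" for z
    using complex_Re_le_cmod[of "1 - p z"] near[OF that] by (simp add: norm_minus_commute)
  show ?thesis unfolding subordinate_def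
  proof (intro exI[of _ "\<lambda>z. Ln (p z)"] conjI ballI)
    show "(\<lambda>z. Ln (p z)) holomorphic_on ball 0 1"
      by (rule holomorphic_on_Ln'[OF _ hol]) (use Re_pos in \<open>fastforce simp: complex_nonpos_Reals_iff\<close>)
    show "(\<lambda>z. Ln (p z)) ` ball 0 1 \<subseteq> ball 0 1"
      using norm_Ln_one_plus_less_one[OF near] by auto
    show "Ln (p 0) = 0" using p0 by simp
    show "p z = exp (Ln (p z))" if "z \<in> ball 0 1" for z
      using Re_pos[OF that] by (subst exp_Ln) auto
  qed
qed

theorem theorem4p8:
  fixes \<alpha>1 \<alpha>2 :: real and p :: "complex \<Rightarrow> complex"
  assumes "\<alpha>1 > 0" and "\<alpha>2 > 0" and "\<alpha>1 - \<alpha>2 \<ge> exp 2"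
    and "p holomorphic_on ball 0 1" and "p 0 = 1"
    and "(\<lambda>z. 1 + of_real \<alpha>1 * z * deriv p z + of_real \<alpha>2 * z\<^sup>2 * deriv (deriv p) z)
           \<prec>\<^sub>D (\<lambda>z. 1 + z * exp z)"
  shows "p \<prec>\<^sub>D exp"
proof -
  have Euler: "norm (of_real \<alpha>1 * \<zeta> * deriv p \<zeta> + of_real \<alpha>2 * \<zeta>\<^sup>2 * deriv (deriv p) \<zeta>)
      \<le> exp 1 * norm \<zeta>" if "\<zeta> \<in> ball 0 1" for \<zeta>
  proof -
    have "norm ((1 + \<xi> * exp \<xi>) - (1 + 0 * exp 0)) \<le> exp 1 * norm \<xi>"
      if "\<xi> \<in> ball 0 1" for \<xi> :: complex
      using norm_mult_exp_le[of \<xi>] that by simp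
    from subordinate_norm_diff_le[OF assms(6) this that] show ?thesis by simp
  qed
  have "exp 1 * exp 1 \<le> \<alpha>1"
    using assms(2,3) exp_add[of "1::real" 1] by simp
  then have "exp 1 / \<alpha>1 \<le> 1 / exp 1"
    using assms(1) by (simp add: field_simps)
  also have "\<dots> \<le> 1 / 2"
    using exp_ge_add_one_self[of "1::real"] by simp
  finally have "exp 1 / \<alpha>1 \<le> 1 / 2" .
  have "norm (p z - 1) < 1 / 2" if z: "z \<in> ball 0 1" for z
  proof -
    have "norm (p z - p 0) \<le> exp 1 / \<alpha>1 * norm (z - 0)"
      by (rule field_differentiable_bound[of "ball 0 1"])
         (use z Euler_bound_imp_norm_le[OF assms(1,2) holomorphic_deriv[OF assms(4) open_ball] Euler]
           holomorphic_derivI[OF assms(4) open_ball] in auto)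
    then have "norm (p z - 1) \<le> exp 1 / \<alpha>1 * norm z" using assms(5) by simp
    also have "\<dots> \<le> 1 / 2 * norm z"
      using \<open>exp 1 / \<alpha>1 \<le> 1 / 2\<close> by (rule mult_right_mono) simp
    also have "\<dots> < 1 / 2" using z by simp
    finally show ?thesis .
  qed
  then show ?thesis
    using subordinate_exp_if_norm_diff_one_less[OF assms(4,5)] by blast
qed

end
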